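(* Let $\Omega$ be a state space with finitely many extreme points and positive cone $V_+$. If a linear map $J:V\to V$ is strictly positive with respect to an inner product $(\cdot,\cdot)$ on $V$ and satisfies $J(V_+)=V_+$, then for each extreme point $\omega^{\mathrm{ext}}$ of $\Omega$ there exists $\mu(\omega^{\mathrm{ext}})>0$ such that $J(\omega^{\mathrm{ext}})=\mu(\omega^{\mathrm{ext}})\omega^{\mathrm{ext}}$.
   Context: $V=\mathbb R^{N+1}$. A state space $\Omega\subset V$ is a compact convex set with $\mathrm{span}(\Omega)=V$ and $0\notin\mathrm{aff}(\Omega)$; $V_+=\{\lambda\omega:\lambda\ge0,\omega\in\Omega\}$. A linear map $J$ is strictly positive with respect to $(\cdot,\cdot)$ if $(x,Jy)=(Jx,y)$ for all $x,y$ and $(x,Jx)>0$ for all nonzero $x$. *)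

theory Defs
  imports "HOL-Analysis.Analysis"
begin

definition state_space :: "('a::euclidean_space) set \<Rightarrow> bool" where
  "state_space \<Omega> \<longleftrightarrow> compact \<Omega> \<and> convex \<Omega> \<and> span \<Omega> = UNIV \<and> 0 \<notin> affine hull \<Omega>"

definition pos_cone :: "('a::real_vector) set \<Rightarrow> 'a set" where
  "pos_cone \<Omega> = {l *\<^sub>R w | l w. l \<ge> 0 \<and> w \<in> \<Omega>}"

definition is_inner_product :: "('a::real_vector \<Rightarrow> 'a \<Rightarrow> real) \<Rightarrow> bool" where
  "is_inner_product ip \<longleftrightarrow> (\<forall>x. linear (ip x)) \<and> (\<forall>x y. ip x y = ip y x)
     \<and> (\<forall>x. x \<noteq> 0 \<longrightarrow> ip x x > 0)"

definition strictly_positive :: "('a::real_vector \<Rightarrow> 'a \<Rightarrow> real) \<Rightarrow> ('a \<Rightarrow> 'a) \<Rightarrow> bool" where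
  "strictly_positive ip J \<longleftrightarrow> (\<forall>x y. ip x (J y) = ip (J x) y) \<and> (\<forall>x. x \<noteq> 0 \<longrightarrow> ip x (J x) > 0)"

end

theory Submission
  imports Defs
begin

text \<open>
  Strict positivity makes J injective, so J permutes the extreme rays of the cone V+, and
  these are exactly the rays through the extreme points of \<Omega>. As there are finitely many,
  the orbit of an extreme point w returns to its own ray: J^d w = c w with d > 0 and c > 0.
  For r = c^(1/d) and u = J w - r w we get 0 = J^d w - r^d w = \<Sum>i<d. r^(d-1-i) J^i u.
  Pairing with u gives a sum of terms r^(d-1-i) (u, J^i u) \<ge> 0 (by symmetry (u, J^(m+2) u) =
  (J u, J^m (J u))) whose term for i = 0 is positive unless u = 0. Hence J w = r w.
\<close>

lemma linear_funpow:
  fixes f :: "'a::real_vector \<Rightarrow> 'a"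
  shows "linear f \<Longrightarrow> linear (f ^^ n)"
proof (induction n)
  case 0
  show ?case by (simp add: linear_ident)
next
  case (Suc n)
  show ?case
    unfolding funpow.simps(2) by (rule linear_compose[OF Suc.IH[OF Suc.prems] Suc.prems])
qed

lemma is_inner_product_linear: "is_inner_product ip \<Longrightarrow> linear (ip x)"
  by (simp add: is_inner_product_def)

lemma is_inner_product_nonneg: "is_inner_product ip \<Longrightarrow> 0 \<le> ip x x"
  by (metis is_inner_product_def is_inner_product_linear linear_0 order.strict_implies_order order.refl)

lemma strictly_positive_nonneg:
  "is_inner_product ip \<Longrightarrow> strictly_positive ip J \<Longrightarrow> 0 \<le> ip x (J x)"
  by (metis strictly_positive_def is_inner_product_linear linear_0 order.strict_implies_order order.refl)

lemma strictly_positive_inj: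
  assumes "is_inner_product ip" "linear J" "strictly_positive ip J"
  shows "inj J"
  unfolding linear_injective_0[OF assms(2)]
  using assms(3) linear_0[OF is_inner_product_linear[OF assms(1)]]
  by (metis strictly_positive_def less_irrefl)

lemma strictly_positive_funpow_nonneg:
  assumes "is_inner_product ip" "strictly_positive ip J"
  shows "0 \<le> ip x ((J ^^ k) x)"
proof (induction k arbitrary: x rule: nat_induct2)
  case 0
  show ?case using is_inner_product_nonneg[OF assms(1)] by simp
next
  case 1
  show ?case using strictly_positive_nonneg[OF assms] by simp
next
  case (step k)
  have "(J ^^ Suc (Suc k)) x = J ((J ^^ k) (J x))"
    by (metis funpow.simps(2) comp_apply funpow_swap1)
  then have "ip x ((J ^^ Suc (Suc k)) x) = ip (J x) ((J ^^ k) (J x))"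
    using assms(2) by (simp add: strictly_positive_def del: funpow.simps)
  then show ?case using step.IH by simp
qed

lemma funpow_sub_power_eq_sum:
  assumes "linear J"
  shows "(J ^^ d) w - r ^ d *\<^sub>R w = (\<Sum>i<d. r ^ (d - Suc i) *\<^sub>R (J ^^ i) (J w - r *\<^sub>R w))"
proof (induction d)
  case (Suc d)
  have "(J ^^ d) (J w - r *\<^sub>R w) = (J ^^ Suc d) w - r *\<^sub>R (J ^^ d) w"
    using linear_funpow[OF assms, of d]
    by (simp add: linear_diff linear_scale funpow_Suc_right del: funpow.simps)
  then have "(J ^^ Suc d) w - r ^ Suc d *\<^sub>R w = (J ^^ d) (J w - r *\<^sub>R w) + r *\<^sub>R ((J ^^ d) w - r ^ d *\<^sub>R w)"
    by (simp add: algebra_simps del: funpow.simps)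
  also have "r *\<^sub>R ((J ^^ d) w - r ^ d *\<^sub>R w) = (\<Sum>i<d. r ^ (Suc d - Suc i) *\<^sub>R (J ^^ i) (J w - r *\<^sub>R w))"
    unfolding Suc.IH scaleR_sum_right
    by (intro sum.cong) (simp_all add: Suc_diff_Suc[symmetric] del: diff_Suc_Suc)
  finally show ?case by simp
qed simp

lemma strictly_positive_eigenvector_of_funpow:
  assumes "is_inner_product ip" "linear J" "strictly_positive ip J"
    and "(J ^^ d) w = c *\<^sub>R w" "0 < d" "0 < c"
  shows "J w = root d c *\<^sub>R w"
proof (rule ccontr)
  define r where "r = root d c"
  define u where "u = J w - r *\<^sub>R w"
  assume "J w \<noteq> root d c *\<^sub>R w"
  then have "u \<noteq> 0" by (simp add: u_def r_def)
  have r: "0 < r" "r ^ d = c"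
    using assms(5,6) by (simp_all add: r_def real_root_gt_zero real_root_pow_pos)
  have "(\<Sum>i<d. r ^ (d - Suc i) *\<^sub>R (J ^^ i) u) = 0"
    using funpow_sub_power_eq_sum[OF assms(2), of d w r] assms(4) r by (simp add: u_def)
  moreover have "ip u (\<Sum>i<d. r ^ (d - Suc i) *\<^sub>R (J ^^ i) u) = (\<Sum>i<d. r ^ (d - Suc i) * ip u ((J ^^ i) u))"
    using is_inner_product_linear[OF assms(1), of u] by (simp add: linear_sum linear_scale)
  ultimately have "(\<Sum>i<d. r ^ (d - Suc i) * ip u ((J ^^ i) u)) = 0"
    using linear_0[OF is_inner_product_linear[OF assms(1)]] by simp
  moreover have "0 < (\<Sum>i<d. r ^ (d - Suc i) * ip u ((J ^^ i) u))"
  proof (rule sum_pos2)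
    show "0 < r ^ (d - Suc 0) * ip u ((J ^^ 0) u)"
      using \<open>u \<noteq> 0\<close> assms(1) r(1) by (simp add: is_inner_product_def)
    show "0 \<le> r ^ (d - Suc i) * ip u ((J ^^ i) u)" for i
      using strictly_positive_funpow_nonneg[OF assms(1,3)] r(1) by simp
  qed (use assms(5) in auto)
  ultimately show False by simp
qed

definition extreme_ray :: "'a::real_vector set \<Rightarrow> 'a \<Rightarrow> bool" where
  "extreme_ray C x \<longleftrightarrow> x \<in> C \<and> x \<noteq> 0 \<and> (\<forall>a\<in>C. \<forall>b\<in>C. x = a + b \<longrightarrow> (\<exists>t\<ge>0. a = t *\<^sub>R x))"

lemma extreme_ray_linear_image:
  assumes "linear J" "inj J" "J ` C = C" "extreme_ray C x"
  shows "extreme_ray C (J x)"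
  unfolding extreme_ray_def
proof (intro conjI ballI impI)
  show "J x \<in> C" "J x \<noteq> 0"
    using assms by (auto simp: extreme_ray_def linear_injective_0)
  fix a b assume "a \<in> C" "b \<in> C" "J x = a + b"
  then obtain a' b' where "a' \<in> C" "b' \<in> C" "a = J a'" "b = J b'"
    using assms(3) by (metis imageE)
  then have "x = a' + b'"
    using \<open>J x = a + b\<close> assms(1,2) by (simp add: inj_eq flip: linear_add)
  then obtain t where "t \<ge> 0" "a' = t *\<^sub>R x"
    using \<open>a' \<in> C\<close> \<open>b' \<in> C\<close> assms(4) unfolding extreme_ray_def by blast
  then show "\<exists>t\<ge>0. a = t *\<^sub>R J x"
    using \<open>a = J a'\<close> linear_scale[OF assms(1)] by auto
qed

lemma eq_if_scaleR_eq_zero_notin_affine_hull: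
  assumes "0 \<notin> affine hull \<Omega>" "p \<in> \<Omega>" "q \<in> \<Omega>" "c *\<^sub>R p = d *\<^sub>R q" "c \<noteq> 0"
  shows "p = q"
proof -
  define s where "s = d / c"
  have "p = inverse c *\<^sub>R (c *\<^sub>R p)"
    using assms(5) by simp
  then have p: "p = s *\<^sub>R q"
    by (simp add: assms(4) s_def divide_inverse_commute)
  have "s = 1"
  proof (rule ccontr)
    assume "s \<noteq> 1"
    define t where "t = 1 / (1 - s)"
    have "t *\<^sub>R p + (1 - t) *\<^sub>R q \<in> affine hull \<Omega>"
      using assms(2,3) by (intro mem_affine[OF affine_affine_hull]) (auto simp: hull_inc)
    moreover have "t *\<^sub>R p + (1 - t) *\<^sub>R q = 0"
      using \<open>s \<noteq> 1\<close> by (simp add: p t_def algebra_simps divide_simps)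
    ultimately show False
      using assms(1) by simp
  qed
  then show ?thesis
    using p by simp
qed

lemma extreme_point_of_convex_combination:
  assumes "x extreme_point_of S" "a \<in> S" "b \<in> S" "0 < u" "u < 1"
    and "x = (1 - u) *\<^sub>R a + u *\<^sub>R b"
  shows "a = b"
  using assms by (auto simp: extreme_point_of_def in_segment)

lemma scaleR_mem_pos_cone: "w \<in> \<Omega> \<Longrightarrow> 0 \<le> l \<Longrightarrow> l *\<^sub>R w \<in> pos_cone \<Omega>"
  unfolding pos_cone_def by blast

lemma extreme_point_imp_extreme_ray:
  assumes "convex \<Omega>" "0 \<notin> affine hull \<Omega>" "w extreme_point_of \<Omega>"
  shows "extreme_ray (pos_cone \<Omega>) w"
  unfolding extreme_ray_def
proof (intro conjI ballI impI)
  have "w \<in> \<Omega>"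
    using assms(3) by (simp add: extreme_point_of_def)
  then show "w \<in> pos_cone \<Omega>" "w \<noteq> 0"
    using assms(2) scaleR_mem_pos_cone[of w \<Omega> 1] by (auto simp: hull_inc)
  fix a b assume "a \<in> pos_cone \<Omega>" "b \<in> pos_cone \<Omega>" and wab: "w = a + b"
  then obtain l1 w1 l2 w2 where a: "a = l1 *\<^sub>R w1" "l1 \<ge> 0" "w1 \<in> \<Omega>"
    and b: "b = l2 *\<^sub>R w2" "l2 \<ge> 0" "w2 \<in> \<Omega>"
    by (auto simp: pos_cone_def)
  have "l1 + l2 > 0"
    using wab a b \<open>w \<noteq> 0\<close> by (cases "l1 = 0"; cases "l2 = 0") auto
  define p where "p = (l1 / (l1 + l2)) *\<^sub>R w1 + (l2 / (l1 + l2)) *\<^sub>R w2"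
  have "p \<in> \<Omega>"
    unfolding p_def using \<open>l1 + l2 > 0\<close> a b
    by (intro convexD[OF assms(1)]) (auto simp: add_divide_distrib[symmetric])
  moreover have "1 *\<^sub>R w = (l1 + l2) *\<^sub>R p"
    unfolding p_def using \<open>l1 + l2 > 0\<close> wab a b by (simp add: scaleR_add_right)
  ultimately have "w = p"
    by (intro eq_if_scaleR_eq_zero_notin_affine_hull[OF assms(2) \<open>w \<in> \<Omega>\<close>]) auto
  then have "l1 + l2 = 1"
    using \<open>1 *\<^sub>R w = (l1 + l2) *\<^sub>R p\<close> \<open>w \<noteq> 0\<close> by (metis scaleR_cancel_right)
  consider "l1 = 0" | "l2 = 0" | "0 < l2" "l2 < 1"
    using \<open>l1 + l2 = 1\<close> a b by linarith
  then show "\<exists>t\<ge>0. a = t *\<^sub>R w"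
  proof cases
    case 3
    have "w1 = w2"
      using extreme_point_of_convex_combination[OF assms(3) a(3) b(3) 3] wab a b
        \<open>l1 + l2 = 1\<close> by (simp add: eq_diff_eq[symmetric])
    then have "w = w1"
      using wab a b \<open>l1 + l2 = 1\<close> by (simp flip: scaleR_add_left)
    then show ?thesis using a by blast
  qed (use a b wab in auto)
qed

lemma extreme_ray_imp_extreme_point:
  assumes "0 \<notin> affine hull \<Omega>" "extreme_ray (pos_cone \<Omega>) x"
  shows "\<exists>c>0. \<exists>e. e extreme_point_of \<Omega> \<and> x = c *\<^sub>R e"
proof -
  obtain l w where x: "x = l *\<^sub>R w" "0 \<le> l" "w \<in> \<Omega>"
    using assms(2) unfolding extreme_ray_def pos_cone_def by blast
  then have "0 < l"
    using assms(2) unfolding extreme_ray_def by fastforce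
  have summand_eq: "r = w"
    if r: "r \<in> \<Omega>" "0 < k" and z: "z \<in> pos_cone \<Omega>" "x = (l * k) *\<^sub>R r + z" for r k z
  proof -
    have "(l * k) *\<^sub>R r \<in> pos_cone \<Omega>"
      using r \<open>0 < l\<close> by (simp add: scaleR_mem_pos_cone)
    then obtain t where "(l * k) *\<^sub>R r = t *\<^sub>R x"
      using z assms(2) unfolding extreme_ray_def by blast
    then have "(l * k) *\<^sub>R r = (t * l) *\<^sub>R w"
      using x(1) by simp
    then show ?thesis
      using eq_if_scaleR_eq_zero_notin_affine_hull[OF assms(1) \<open>r \<in> \<Omega>\<close> x(3)] r(2) \<open>0 < l\<close>
      by simp
  qed
  have "w extreme_point_of \<Omega>"
    unfolding extreme_point_of_def
  proof (intro conjI ballI notI)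
    fix p q assume "p \<in> \<Omega>" "q \<in> \<Omega>" "w \<in> open_segment p q"
    then obtain u where u: "p \<noteq> q" "0 < u" "u < 1" "w = (1 - u) *\<^sub>R p + u *\<^sub>R q"
      by (auto simp: in_segment)
    have sum: "x = (l * (1 - u)) *\<^sub>R p + (l * u) *\<^sub>R q" "x = (l * u) *\<^sub>R q + (l * (1 - u)) *\<^sub>R p"
      using x(1) u(4) by (simp_all add: scaleR_add_right)
    have cone: "(l * (1 - u)) *\<^sub>R p \<in> pos_cone \<Omega>" "(l * u) *\<^sub>R q \<in> pos_cone \<Omega>"
      using \<open>p \<in> \<Omega>\<close> \<open>q \<in> \<Omega>\<close> \<open>0 < l\<close> u(2,3) by (simp_all add: scaleR_mem_pos_cone)
    have "p = w"
      using summand_eq[OF \<open>p \<in> \<Omega>\<close> _ cone(2) sum(1)] u(3) by simp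
    moreover have "q = w"
      using summand_eq[OF \<open>q \<in> \<Omega>\<close> _ cone(1) sum(2)] u(2) by simp
    ultimately show False
      using u(1) by simp
  qed (rule x(3))
  then show ?thesis
    using x(1) \<open>0 < l\<close> by blast
qed

lemma funpow_eigenvector_if_orbit_in_finitely_many_rays:
  fixes J :: "'a::real_vector \<Rightarrow> 'a"
  assumes "linear J" "inj J" "finite E" "\<And>k. \<exists>c>0. \<exists>e\<in>E. (J ^^ k) w = c *\<^sub>R e"
  shows "\<exists>d>0. \<exists>c>0. (J ^^ d) w = c *\<^sub>R w"
proof -
  obtain g f where gf: "\<And>k. g k > 0" "\<And>k. f k \<in> E" "\<And>k. (J ^^ k) w = g k *\<^sub>R f k"
    using assms(4) by metis
  have "\<not> inj f"
    using finite_subset[OF _ assms(3), of "range f"] gf(2) finite_imageD[of f UNIV] by auto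
  then obtain k1 k2 where k: "k1 < k2" "f k1 = f k2"
    unfolding inj_def by (metis linorder_neq_iff)
  define c where "c = g k2 / g k1"
  have "(J ^^ k1) ((J ^^ (k2 - k1)) w) = (J ^^ k2) w"
    using k(1) by (metis funpow_add le_add_diff_inverse less_imp_le comp_apply)
  also have "\<dots> = c *\<^sub>R (J ^^ k1) w"
    using gf(1)[of k1] k(2) by (simp add: c_def gf(3))
  also have "\<dots> = (J ^^ k1) (c *\<^sub>R w)"
    using linear_funpow[OF assms(1)] by (simp add: linear_scale)
  finally have "(J ^^ (k2 - k1)) w = c *\<^sub>R w"
    using inj_fn[OF assms(2)] by (simp add: inj_eq)
  moreover have "c > 0"
    using gf(1) by (simp add: c_def)
  ultimately show ?thesis
    using k(1) zero_less_diff by blast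
qed

theorem lemmaB3:
  fixes \<Omega> :: "(real ^ 'n) set" and J :: "real ^ 'n \<Rightarrow> real ^ 'n"
    and ip :: "real ^ 'n \<Rightarrow> real ^ 'n \<Rightarrow> real"
  assumes "state_space \<Omega>"
    and "finite {w. w extreme_point_of \<Omega>}"
    and "is_inner_product ip"
    and "linear J"
    and "strictly_positive ip J"
    and "J ` pos_cone \<Omega> = pos_cone \<Omega>"
  shows "\<forall>w. w extreme_point_of \<Omega> \<longrightarrow> (\<exists>\<mu>>0. J w = \<mu> *\<^sub>R w)"
proof (intro allI impI)
  fix w assume "w extreme_point_of \<Omega>"
  have "convex \<Omega>" "0 \<notin> affine hull \<Omega>"
    using assms(1) by (auto simp: state_space_def)
  have "inj J"
    using strictly_positive_inj[OF assms(3-5)] .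
  have "extreme_ray (pos_cone \<Omega>) ((J ^^ k) w)" for k
    using extreme_point_imp_extreme_ray[OF \<open>convex \<Omega>\<close> \<open>0 \<notin> affine hull \<Omega>\<close> \<open>w extreme_point_of \<Omega>\<close>]
    by (induction k) (simp_all add: extreme_ray_linear_image[OF assms(4) \<open>inj J\<close> assms(6)])
  then have "\<exists>c>0. \<exists>e\<in>{w. w extreme_point_of \<Omega>}. (J ^^ k) w = c *\<^sub>R e" for k
    using extreme_ray_imp_extreme_point[OF \<open>0 \<notin> affine hull \<Omega>\<close>] by simp
  then obtain d c where "0 < d" "0 < c" "(J ^^ d) w = c *\<^sub>R w"
    using funpow_eigenvector_if_orbit_in_finitely_many_rays[OF assms(4) \<open>inj J\<close> assms(2)] by blast
  then show "\<exists>\<mu>>0. J w = \<mu> *\<^sub>R w"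
    using strictly_positive_eigenvector_of_funpow[OF assms(3-5)] real_root_gt_zero by metis
qed

end
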